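(* Let $p$ be an odd prime and let $a,b_1,b_2,c$ be integers such that $0\le a<p$, $0<c\le p$, $0\le b_2-c+1<p$, $0\le b_1+b_2-c+1<p$, and $p-1\le a+b_1+b_2-c+1<2p-1$. Then in $\mathbb{F}_p$ $$\int_{[1;1]_p}t^a(1-t)^{b_1}(s-t)^{p-c}(1-s)^{b_2}\,dt\,ds=\frac{a!\,(b_1+b_2-c+1)!}{(a+b_1+b_2-c+2-p)!}\cdot\frac{(p-c)!\,b_2!}{(b_2-c+1)!}.$$
   Context: For a polynomial $P(x_1,\dots,x_k)=\sum_d c_dx_1^{d_1}\cdots x_k^{d_k}$ with coefficients in $\mathbb{F}_p$ and $l\in\mathbb{Z}_{>0}^k$, the $\mathbb{F}_p$-integral $\int_{[l_1,\dots,l_k]_p}P\,dx$ is the coefficient $c_{l_1p-1,\dots,l_kp-1}$. Thus the left-hand side is the coefficient of $t^{p-1}s^{p-1}$ in the polynomial reduced mod $p$. Factorials are taken in $\mathbb{F}_p$. *)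

theory Defs
  imports "HOL-Computational_Algebra.Polynomial" "HOL-Library.Cardinality"
begin

text \<open>Bivariate polynomials in variables t, s over a ring 'a are represented as
  'a poly poly: the outer variable is s, the inner (coefficient) variable is t.
  So the coefficient of t^i s^j of P is coeff (coeff P j) i.\<close>

definition var_t :: "'a::comm_ring_1 poly poly" where
  "var_t = [:[:0, 1:]:]"

definition var_s :: "'a::comm_ring_1 poly poly" where
  "var_s = [:0, 1:]"

text \<open>The F_p-integral over [l1, l2]_p (l1 for t, l2 for s): the coefficient of
  t^(l1 p - 1) s^(l2 p - 1), where p = CARD('a) (the field 'a is F_p).\<close>

definition fp_integral2 :: "nat \<Rightarrow> nat \<Rightarrow> 'a::{field,finite} poly poly \<Rightarrow> 'a" where
  "fp_integral2 l1 l2 P = coeff (coeff P (l2 * CARD('a) - 1)) (l1 * CARD('a) - 1)"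

end

theory Submission
  imports
    "HOL-Number_Theory.Residues"
      (* imported before Defs, so that coeff and monom denote the polynomial operations
         and not their HOL-Algebra namesakes *)
    Defs
begin

(* Integrate over s first. Wilson's theorem in the form m! (p - 1 - m)! = (-1)^(m+1) in F_p
   turns the coefficient binom(p-c, j) binom(b2, c-1+j) (-1)^(c-1) of t^j s^(p-1) into
   K binom(b2+1-c, j) (-1)^j with K = -(p-c)! b2! / (b2+1-c)!, i.e. the s-integral is
   K (1 - t)^(b2+1-c). What remains is K times the coefficient of t^(p-1) in t^a (1 - t)^B,
   B = b1+b2+1-c, which is (-1)^(p-1-a) binom(B, p-1-a) = -a! B! / (a+B+1-p)!, again by
   Wilson's theorem. *)

lemma CHAR_eq_CARD_if_prime:
  assumes "prime CARD('a::{ring_1,finite})"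
  shows "CHAR('a) = CARD('a)"
  using CHAR_dvd_CARD[where 'a='a] CHAR_not_1[where 'a='a] assms
  by (metis One_nat_def prime_nat_iff)

lemma of_nat_fact_eq_0_iff_CHAR:
  assumes "CHAR('a::semiring_1) = p" "prime p"
  shows "(of_nat (fact n) :: 'a) = 0 \<longleftrightarrow> p \<le> n"
  using assms by (simp add: of_nat_eq_0_iff_char_dvd prime_dvd_fact_iff)

lemma wilson_theorem_CHAR:
  assumes "CHAR('a::ring_1) = p" "prime p"
  shows "(of_nat (fact (p - 1)) :: 'a) = -1"
proof -
  have "[int (fact (p - 1)) = - 1] (mod int CHAR('a))"
    using wilson_theorem[OF assms(2)] assms(1) by (simp add: of_nat_fact)
  then have "(of_int (int (fact (p - 1))) :: 'a) = of_int (-1)"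
    by (simp only: of_int_eq_iff_cong_CHAR)
  then show ?thesis
    by (simp only: of_int_of_nat_eq of_int_minus of_int_1)
qed

lemma of_nat_fact_mult_fact_complement:
  assumes "CHAR('a::comm_ring_1) = p" "prime p" "j < p"
  shows "(of_nat (fact j) :: 'a) * of_nat (fact (p - 1 - j)) = (-1) ^ (j + 1)"
  using assms(3)
proof (induction j)
  case 0
  then show ?case
    using wilson_theorem_CHAR[OF assms(1,2)] by simp
next
  case (Suc j)
  have "(of_nat (p - 1 - j) :: 'a) = of_nat p - of_nat (Suc j)"
    using Suc.prems by (simp add: of_nat_diff)
  also have "\<dots> = - of_nat (Suc j)"
    using assms(1) of_nat_CHAR[where 'a='a] by simp
  finally have complement: "(of_nat (p - 1 - j) :: 'a) = - of_nat (Suc j)" .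
  have "p - 1 - j = Suc (p - 1 - Suc j)"
    using Suc.prems by simp
  then have "fact (p - 1 - j) = (p - 1 - j) * (fact (p - 1 - Suc j) :: nat)"
    by (metis fact_Suc of_nat_id)
  then have fact_complement:
    "(of_nat (fact (p - 1 - j)) :: 'a) = - of_nat (Suc j) * of_nat (fact (p - 1 - Suc j))"
    by (metis complement of_nat_mult mult_minus_left)
  have "(of_nat (fact j) :: 'a) * of_nat (fact (p - 1 - j))
      = - (of_nat (fact (Suc j)) * of_nat (fact (p - 1 - Suc j)))"
    unfolding fact_complement by (simp add: algebra_simps)
  then show ?case
    using Suc by simp
qed

lemma of_nat_binomial_fact:
  assumes "k \<le> n" "(of_nat (fact k) :: 'a::field) \<noteq> 0"
    and "(of_nat (fact (n - k)) :: 'a) \<noteq> 0"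
  shows "(of_nat (n choose k) :: 'a) = of_nat (fact n) / (of_nat (fact k) * of_nat (fact (n - k)))"
proof -
  have "(of_nat (fact k) * of_nat (fact (n - k)) * of_nat (n choose k) :: 'a) = of_nat (fact n)"
    by (metis binomial_fact_lemma[OF assms(1)] of_nat_mult)
  then show ?thesis
    using assms by (simp add: field_simps)
qed

lemma of_nat_binomial_fact_complement:
  assumes "CHAR('a::field) = p" "prime p" "m \<le> n" "m < p" "n - m < p"
  shows "(of_nat (n choose m) :: 'a)
       = (-1) ^ (m + 1) * of_nat (fact n) * of_nat (fact (p - 1 - m)) / of_nat (fact (n - m))"
proof -
  note fact_ne_0 = of_nat_fact_eq_0_iff_CHAR[OF assms(1,2)]
  have "(of_nat (fact m) :: 'a) * ((-1) ^ (m + 1) * of_nat (fact (p - 1 - m))) = 1"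
    using of_nat_fact_mult_fact_complement[OF assms(1,2,4)]
    by (metis mult.left_commute minus_one_mult_self)
  then have inverse_fact:
    "inverse (of_nat (fact m) :: 'a) = (-1) ^ (m + 1) * of_nat (fact (p - 1 - m))"
    by (metis inverse_unique)
  have "(of_nat (n choose m) :: 'a) = of_nat (fact n) / (of_nat (fact m) * of_nat (fact (n - m)))"
    by (rule of_nat_binomial_fact) (use assms fact_ne_0 in auto)
  then show ?thesis
    by (simp add: inverse_fact divide_inverse mult_ac)
qed

lemma coeff_linear_poly_power':
  fixes a b :: "'a::comm_semiring_1"
  shows "coeff ([:a, b:] ^ n) i = of_nat (n choose i) * b ^ i * a ^ (n - i)"
proof (cases "i \<le> n")
  case True
  then show ?thesis by (rule coeff_linear_poly_power)
next
  case False
  have "degree ([:a, b:] ^ n) \<le> 1 * n"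
    by (rule order.trans[OF degree_power_le]) (simp add: degree_pCons_le)
  then show ?thesis using False by (simp add: coeff_eq_0 binomial_eq_0)
qed

lemma var_s_minus_var_t_power:
  "(var_s - var_t :: 'a::comm_ring_1 poly poly) ^ n
     = (\<Sum>i\<le>n. smult (monom (of_nat (n choose i) * (-1) ^ i) i) (monom 1 (n - i)))"
proof -
  have "(- var_t :: 'a poly poly) ^ i = [:monom ((-1) ^ i) i:]" for i
  proof -
    have "- var_t = [:monom (-1) 1 :: 'a poly:]"
      by (simp add: var_t_def monom_Suc monom_0)
    then show ?thesis
      by (simp add: poly_const_pow monom_power)
  qed
  moreover have "(var_s :: 'a poly poly) ^ k = monom 1 k" for k
    by (simp add: var_s_def monom_altdef)
  ultimately show ?thesis
    using binomial_ring[of "- var_t :: 'a poly poly" var_s n]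
    by (simp add: of_nat_poly smult_monom mult.assoc)
qed

lemma coeff_one_minus_var_s_power:
  "coeff ((1 - var_s :: 'a::comm_ring_1 poly poly) ^ b) k = [:of_nat (b choose k) * (-1) ^ k:]"
proof -
  have "(1 - var_s :: 'a poly poly) = [:1, -1:]"
    by (simp add: var_s_def one_pCons)
  then show ?thesis
    by (simp add: coeff_linear_poly_power' of_nat_poly poly_const_pow flip: pCons_one)
qed

lemma coeff_coeff_var_s_minus_var_t_power_mult:
  fixes n b m :: nat
  assumes "n \<le> m"
  shows "coeff (coeff ((var_s - var_t :: 'a::comm_ring_1 poly poly) ^ n * (1 - var_s) ^ b) m) j
       = of_nat (n choose j) * of_nat (b choose (m - n + j)) * (-1) ^ (m - n)"
proof -
  have summand: "coeff (monom 1 (n - i) * (1 - var_s) ^ b) m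
      = [:of_nat (b choose (m - n + i)) * (-1) ^ (m - n + i) :: 'a:]" if "i \<le> n" for i
    using that assms by (simp add: coeff_monom_mult coeff_one_minus_var_s_power)
  have "coeff (coeff ((var_s - var_t :: 'a poly poly) ^ n * (1 - var_s) ^ b) m) j
      = (\<Sum>i\<le>n. if i = j
          then of_nat (n choose i) * (-1) ^ i * (of_nat (b choose (m - n + i)) * (-1) ^ (m - n + i))
          else 0)"
    unfolding var_s_minus_var_t_power sum_distrib_right coeff_sum
    by (simp add: summand coeff_monom mult_monom flip: monom_0)
  then show ?thesis
    by (auto simp: binomial_eq_0 power_add mult_ac left_minus_one_mult_self)
qed

lemma of_nat_choose_mult_choose_CHAR:
  assumes "CHAR('a::field) = p" "prime p" "0 < c" "c \<le> p" "c \<le> b + 1" "b + 1 - c < p"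
  shows "(of_nat ((p - c) choose j) * of_nat (b choose (c - 1 + j)) * (-1) ^ (c - 1) :: 'a)
       = - (of_nat (fact (p - c)) * of_nat (fact b) / of_nat (fact (b + 1 - c)))
           * (of_nat ((b + 1 - c) choose j) * (-1) ^ j)"
proof -
  define D where "D = b + 1 - c"
  note fact_ne_0 = of_nat_fact_eq_0_iff_CHAR[OF assms(1,2)]
  consider "D < j" | "p - c < j" "j \<le> D" | "j \<le> p - c" "j \<le> D"
    by linarith
  then show ?thesis
  proof cases
    case 1
    then show ?thesis
      using assms by (simp add: D_def binomial_eq_0)
  next
    case 2
    then have "p \<le> b"
      using assms unfolding D_def by linarith
    then show ?thesis
      using 2 fact_ne_0 by (simp add: binomial_eq_0)
  next
    case 3
    have below_p: "j < p" "p - c - j < p" "D - j < p" "D < p"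
      using 3 assms unfolding D_def by auto
    have choose_pc: "(of_nat ((p - c) choose j) :: 'a)
        = of_nat (fact (p - c)) / (of_nat (fact j) * of_nat (fact (p - c - j)))"
      by (rule of_nat_binomial_fact) (use 3 below_p fact_ne_0 in auto)
    have choose_b: "(of_nat (b choose (c - 1 + j)) :: 'a)
        = (-1) ^ (c + j) * of_nat (fact b) * of_nat (fact (p - c - j)) / of_nat (fact (D - j))"
    proof -
      have "p - 1 - (c - 1 + j) = p - c - j" "b - (c - 1 + j) = D - j" "c - 1 + j + 1 = c + j"
        using assms unfolding D_def by auto
      then show ?thesis
        using of_nat_binomial_fact_complement[OF assms(1,2), of "c - 1 + j" b] 3 assms
        unfolding D_def by auto
    qed
    have choose_D: "(of_nat (D choose j) :: 'a)
        = of_nat (fact D) / (of_nat (fact j) * of_nat (fact (D - j)))"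
      by (rule of_nat_binomial_fact) (use 3 below_p fact_ne_0 in auto)
    have "(of_nat ((p - c) choose j) * of_nat (b choose (c - 1 + j)) * (-1) ^ (c - 1) :: 'a)
        = of_nat (fact (p - c)) * of_nat (fact b) / (of_nat (fact j) * of_nat (fact (D - j)))
          * ((-1) ^ (c + j) * (-1) ^ (c - 1))"
      unfolding choose_pc choose_b using below_p fact_ne_0 by (simp add: field_simps)
    also have "(-1 :: 'a) ^ (c + j) * (-1) ^ (c - 1) = - ((-1) ^ j)"
      using assms(3) by (cases c) (simp_all add: power_add mult_ac)
    finally show ?thesis
      unfolding D_def[symmetric] choose_D using below_p fact_ne_0 by (simp add: field_simps)
  qed
qed

lemma coeff_var_s_minus_var_t_power_mult_CHAR:
  assumes "CHAR('a::field) = p" "prime p" "0 < c" "c \<le> p" "c \<le> b + 1" "b + 1 - c < p"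
  shows "coeff ((var_s - var_t :: 'a poly poly) ^ (p - c) * (1 - var_s) ^ b) (p - 1)
       = smult (- (of_nat (fact (p - c)) * of_nat (fact b) / of_nat (fact (b + 1 - c))))
           ([:1, -1:] ^ (b + 1 - c))" (is "?lhs = ?rhs")
proof (rule poly_eqI)
  fix j
  have "p - c \<le> p - 1" "p - 1 - (p - c) = c - 1"
    using assms(3,4) by auto
  then have "coeff ?lhs j = of_nat ((p - c) choose j) * of_nat (b choose (c - 1 + j)) * (-1) ^ (c - 1)"
    by (simp add: coeff_coeff_var_s_minus_var_t_power_mult)
  also have "\<dots> = - (of_nat (fact (p - c)) * of_nat (fact b) / of_nat (fact (b + 1 - c)))
           * (of_nat ((b + 1 - c) choose j) * (-1) ^ j)"
    by (rule of_nat_choose_mult_choose_CHAR[OF assms])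
  finally show "coeff ?lhs j = coeff ?rhs j"
    by (simp add: coeff_linear_poly_power')
qed

lemma coeff_monom_mult_one_minus_X_power_CHAR:
  assumes "CHAR('a::field) = p" "prime p" "a < p" "B < p" "p - 1 \<le> a + B"
  shows "coeff (monom 1 a * [:1, -1:] ^ B :: 'a poly) (p - 1)
       = - (of_nat (fact a) * of_nat (fact B) / of_nat (fact (a + B + 1 - p)))"
proof -
  have "coeff (monom 1 a * [:1, -1:] ^ B :: 'a poly) (p - 1)
      = of_nat (B choose (p - 1 - a)) * (-1) ^ (p - 1 - a)"
    using assms(3) by (simp add: coeff_monom_mult coeff_linear_poly_power')
  also have "of_nat (B choose (p - 1 - a))
      = (-1) ^ (p - a) * of_nat (fact B) * of_nat (fact a) / (of_nat (fact (a + B + 1 - p)) :: 'a)"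
  proof -
    have "p - 1 - (p - 1 - a) = a" "B - (p - 1 - a) = a + B + 1 - p" "p - 1 - a + 1 = p - a"
      using assms by auto
    then show ?thesis
      using of_nat_binomial_fact_complement[OF assms(1,2), of "p - 1 - a" B] assms by auto
  qed
  also have "(-1 :: 'a) ^ (p - a) = - ((-1) ^ (p - 1 - a))"
  proof -
    have "p - a = Suc (p - 1 - a)"
      using assms(3) by simp
    then show ?thesis
      by simp
  qed
  finally show ?thesis
    by (simp add: mult_ac)
qed

theorem theorem3p7:
  fixes p a b1 b2 c :: nat
  assumes "prime p" and "odd p" and "CARD('a::{field,finite}) = p"
    and "a < p" and "0 < c" and "c \<le> p"
    and "c \<le> b2 + 1" and "b2 + 1 - c < p"
    and "c \<le> b1 + b2 + 1" and "b1 + b2 + 1 - c < p"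
    and "c \<le> a + b1 + b2 + 1"
    and "p - 1 \<le> a + b1 + b2 + 1 - c" and "a + b1 + b2 + 1 - c < 2 * p - 1"
  shows "fp_integral2 1 1
           ((var_t :: 'a poly poly) ^ a * (1 - var_t) ^ b1 * (var_s - var_t) ^ (p - c) * (1 - var_s) ^ b2)
         = of_nat (fact a) * of_nat (fact (b1 + b2 + 1 - c)) / of_nat (fact (a + b1 + b2 + 2 - c - p))
           * (of_nat (fact (p - c)) * of_nat (fact b2) / of_nat (fact (b2 + 1 - c)))"
proof -
  have char: "CHAR('a) = p"
    using CHAR_eq_CARD_if_prime[where 'a='a] assms(1,3) by simp
  define K :: 'a where "K = - (of_nat (fact (p - c)) * of_nat (fact b2) / of_nat (fact (b2 + 1 - c)))"
  have exponent: "b1 + b2 + 1 - c = b1 + (b2 + 1 - c)"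
    using assms(7) by simp
  have integrand:
    "(var_t :: 'a poly poly) ^ a * (1 - var_t) ^ b1 * (var_s - var_t) ^ (p - c) * (1 - var_s) ^ b2
      = smult (monom 1 a * [:1, -1:] ^ b1) ((var_s - var_t) ^ (p - c) * (1 - var_s) ^ b2)"
    by (simp add: var_t_def one_pCons poly_const_pow monom_altdef mult_ac)
  have "fp_integral2 1 1
           ((var_t :: 'a poly poly) ^ a * (1 - var_t) ^ b1 * (var_s - var_t) ^ (p - c) * (1 - var_s) ^ b2)
      = coeff (monom 1 a * [:1, -1:] ^ b1
          * coeff ((var_s - var_t) ^ (p - c) * (1 - var_s) ^ b2) (p - 1)) (p - 1)"
    unfolding fp_integral2_def integrand using assms(3) by simp
  also have "\<dots> = K * coeff (monom 1 a * [:1, -1:] ^ (b1 + b2 + 1 - c)) (p - 1)"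
    unfolding coeff_var_s_minus_var_t_power_mult_CHAR[OF char assms(1,5,6,7,8)] K_def exponent
    by (simp add: power_add mult_ac)
  also have "\<dots> = K * - (of_nat (fact a) * of_nat (fact (b1 + b2 + 1 - c))
                              / of_nat (fact (a + b1 + b2 + 2 - c - p)))"
  proof -
    have "p - 1 \<le> a + (b1 + b2 + 1 - c)"
      "a + (b1 + b2 + 1 - c) + 1 - p = a + b1 + b2 + 2 - c - p"
      using assms(9,12) by auto
    then show ?thesis
      using coeff_monom_mult_one_minus_X_power_CHAR[OF char assms(1,4,10)] by simp
  qed
  finally show ?thesis
    by (simp add: K_def mult_ac)
qed

end
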